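(* Let $\mathcal{X}$ be finite with $|\mathcal{X}|\ge2$, $P$ a pmf on $\mathcal{X}$ with $P(x)>0$ for all $x$, and $L_{\rm th}>0$ satisfy $$H(P)+\log_2\big(1+1/\sqrt2\big)<L_{\rm th}.$$ Define $$\Delta^*(P)=\inf_{\ell\in\Lambda,\ \mathbb{E}[L]<L_{\rm th}}\ \sup_{z\ge0}\ \sup_{Q}\Big(\sum_{x}\tilde g_{z,Q,P}(x)\ell(x)-\frac{z^2}{2}L_{\rm th}\Big),$$ $Q$ ranging over pmfs on $\mathcal{X}$ and $L=\ell(X)$, $X\sim P$. Then $\Delta^*(P)=\inf_{\ell\in\Lambda,\ \mathbb{E}[L]<L_{\rm th}}\Big(\mathbb{E}[L]+\frac{\mathbb{E}[L^2]}{2(L_{\rm th}-\mathbb{E}[L])}\Big)$, and $$\Delta^*(P)=\max_{z\ge0}\max_{Q}\ \min_{\ell\in\Lambda,\ \mathbb{E}[L]<L_{\rm th}}\Big(\sum_x\tilde g_{z,Q,P}(x)\ell(x)-\frac{z^2}{2}L_{\rm th}\Big)=\max_{z\ge0}\max_{Q}\Big(\sum_{x}\tilde g_{z,Q,P}(x)\log_2\frac{\sum_{x'}\tilde g_{z,Q,P}(x')}{\tilde g_{z,Q,P}(x)}-\frac{z^2}{2}L_{\rm th}\Big).$$ Moreover, if $(z^*,Q^* )$ maximizes the last expression, then $\Delta^*(P)$ is attained uniquely by the lengths $\ell^*(x)=-\log_2P^*(x)$, where $P^*(x)=\tilde g_{z^*,Q^*,P}(x)/\sum_{x'}\tilde 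g_{z^*,Q^*,P}(x')$.
   Context: $\Lambda=\{\ell\in\mathbb{R}_+^{\mathcal{X}}:\sum_{x}2^{-\ell(x)}\le1\}$. $\tilde g_{z,Q,P}(x)=\big(1+\frac{z^2}{2}\big)P(x)+z\sqrt{Q(x)P(x)}$. $H(P)=-\sum_xP(x)\log_2P(x)$. Motivation: $\mathbb{E}[L]+\frac{\mathbb{E}[L^2]}{2(L_{\rm th}-\mathbb{E}[L])}$ is the average waiting time in an M/G/1 FCFS queue with arrival rate $1/L_{\rm th}$ and service times distributed as the codeword length $L$. *)

theory Defs
  imports Complex_Main
begin

definition Lam :: "('a::finite \<Rightarrow> real) set" where
  "Lam = {l. (\<forall>x. 0 \<le> l x) \<and> (\<Sum>x\<in>UNIV. 2 powr (- l x)) \<le> 1}"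

definition pmfs :: "('a::finite \<Rightarrow> real) set" where
  "pmfs = {Q. (\<forall>x. 0 \<le> Q x) \<and> (\<Sum>x\<in>UNIV. Q x) = 1}"

definition entropy :: "('a::finite \<Rightarrow> real) \<Rightarrow> real" where
  "entropy P = - (\<Sum>x\<in>UNIV. P x * log 2 (P x))"

definition gt :: "real \<Rightarrow> ('a::finite \<Rightarrow> real) \<Rightarrow> ('a \<Rightarrow> real) \<Rightarrow> 'a \<Rightarrow> real" where
  "gt z Q P x = (1 + z^2 / 2) * P x + z * sqrt (Q x * P x)"

definition expect :: "('a::finite \<Rightarrow> real) \<Rightarrow> ('a \<Rightarrow> real) \<Rightarrow> real" where
  "expect P f = (\<Sum>x\<in>UNIV. P x * f x)"

definition feasible :: "('a::finite \<Rightarrow> real) \<Rightarrow> real \<Rightarrow> ('a \<Rightarrow> real) set" where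
  "feasible P Lth = {l \<in> Lam. expect P l < Lth}"

definition obj :: "('a::finite \<Rightarrow> real) \<Rightarrow> real \<Rightarrow> real \<Rightarrow> ('a \<Rightarrow> real) \<Rightarrow> ('a \<Rightarrow> real) \<Rightarrow> real" where
  "obj P Lth z Q l = (\<Sum>x\<in>UNIV. gt z Q P x * l x) - z^2 / 2 * Lth"

definition Phi :: "('a::finite \<Rightarrow> real) \<Rightarrow> real \<Rightarrow> ('a \<Rightarrow> real) \<Rightarrow> real" where
  "Phi P Lth l = (SUP z\<in>{0..}. SUP Q\<in>pmfs. obj P Lth z Q l)"

definition Delta_star :: "('a::finite \<Rightarrow> real) \<Rightarrow> real \<Rightarrow> real" where
  "Delta_star P Lth = (INF l\<in>feasible P Lth. Phi P Lth l)"

definition gibbs_val :: "('a::finite \<Rightarrow> real) \<Rightarrow> real \<Rightarrow> real \<Rightarrow> ('a \<Rightarrow> real) \<Rightarrow> real" where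
  "gibbs_val P Lth z Q =
     (\<Sum>x\<in>UNIV. gt z Q P x * log 2 ((\<Sum>x'\<in>UNIV. gt z Q P x') / gt z Q P x)) - z^2 / 2 * Lth"

definition is_max_val :: "real set \<Rightarrow> real \<Rightarrow> bool" where
  "is_max_val S v \<longleftrightarrow> v \<in> S \<and> (\<forall>y\<in>S. y \<le> v)"

end

theory Submission
  imports Defs "HOL-Analysis.Analysis"
begin

text \<open>
  For fixed lengths l with E[L] < Lth, the objective is maximised over z \<ge> 0 and Q by the equality
  case of an AM-GM estimate, and the maximum is the M/G/1 delay E[L] + E[L^2] / (2 (Lth - E[L])).
  So \<Delta>* is the infimum of this delay; it is attained because the delay blows up as E[L]
  approaches Lth, and the Shannon lengths of P are feasible by the entropy assumption. The first-order
  condition at a minimiser ls says that ls minimises the linear functional obj at the maximising pair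
  (z*, Q*) over the convex set of Kraft lengths, so ls and (z*, Q*) form a saddle point.
  For fixed (z, Q), Gibbs' inequality shows that the minimum of obj over Kraft lengths is the Gibbs
  value, attained only at the Shannon lengths of the weights gt z Q P. The saddle point then yields the
  max-min identities, and the uniqueness of the equality case in Gibbs' inequality yields the
  uniqueness of the optimal lengths.
\<close>

section \<open>Gibbs' inequality for Kraft lengths\<close>

definition shannon_len :: "('a::finite \<Rightarrow> real) \<Rightarrow> 'a \<Rightarrow> real" where
  "shannon_len g x = - log 2 (g x / (\<Sum>y\<in>UNIV. g y))"

lemma shannon_len_eq: "shannon_len g = (\<lambda>x. - log 2 (g x / (\<Sum>y\<in>UNIV. g y)))"
  by (simp add: fun_eq_iff shannon_len_def)

lemma shannon_len_in_Lam:
  fixes g :: "'a::finite \<Rightarrow> real"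
  assumes g: "\<And>x. g x > 0"
  shows "shannon_len g \<in> Lam"
proof -
  define S where "S = (\<Sum>y\<in>UNIV. g y)"
  have S: "S > 0" unfolding S_def using g by (simp add: sum_pos)
  have "g x \<le> S" for x unfolding S_def using g by (intro member_le_sum) (auto intro: less_imp_le)
  then have "0 \<le> shannon_len g x" for x
    using g[of x] S by (simp add: shannon_len_def S_def[symmetric] log_le_zero_cancel_iff)
  moreover have "(\<Sum>x\<in>UNIV. 2 powr (- shannon_len g x)) = (\<Sum>x\<in>UNIV. g x / S)"
    using g S by (intro sum.cong) (auto simp: shannon_len_def S_def[symmetric])
  moreover have "(\<Sum>x\<in>UNIV. g x / S) = 1"
    using S by (simp add: sum_divide_distrib[symmetric] S_def)
  ultimately show ?thesis by (simp add: Lam_def)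
qed

lemma sum_mult_shannon_len:
  fixes g :: "'a::finite \<Rightarrow> real"
  assumes g: "\<And>x. g x > 0"
  shows "(\<Sum>x\<in>UNIV. g x * shannon_len g x) = (\<Sum>x\<in>UNIV. g x * log 2 ((\<Sum>y\<in>UNIV. g y) / g x))"
proof -
  have "(\<Sum>y\<in>UNIV. g y) > 0" using g by (simp add: sum_pos)
  then show ?thesis using g by (intro sum.cong) (auto simp: shannon_len_def log_divide algebra_simps)
qed

lemma expect_shannon_len_eq_entropy:
  assumes "P \<in> pmfs"
  shows "expect P (shannon_len P) = entropy P"
  using assms by (simp add: pmfs_def expect_def entropy_def shannon_len_def sum_negf)

lemma gibbs_gap:
  fixes g l :: "'a::finite \<Rightarrow> real"
  assumes g: "\<And>x. g x > 0"
  defines "S \<equiv> \<Sum>y\<in>UNIV. g y"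
  defines "\<rho> \<equiv> \<lambda>x. S * 2 powr (- l x) / g x"
  shows "ln 2 * ((\<Sum>x\<in>UNIV. g x * l x) - (\<Sum>x\<in>UNIV. g x * shannon_len g x))
    = (\<Sum>x\<in>UNIV. g x * (\<rho> x - 1 - ln (\<rho> x))) + S * (1 - (\<Sum>x\<in>UNIV. 2 powr (- l x)))"
proof -
  have S: "S > 0" unfolding S_def using g by (simp add: sum_pos)
  have pointwise: "g x * (\<rho> x - 1 - ln (\<rho> x))
      = S * 2 powr (- l x) - g x + ln 2 * (g x * l x - g x * shannon_len g x)" for x
    using g[of x] S by (simp add: \<rho>_def shannon_len_def S_def[symmetric] ln_mult ln_div log_def powr_def field_simps)
  have "(\<Sum>x\<in>UNIV. g x * (\<rho> x - 1 - ln (\<rho> x)))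
      = (\<Sum>x\<in>UNIV. S * 2 powr (- l x) - g x + ln 2 * (g x * l x - g x * shannon_len g x))"
    by (rule sum.cong[OF refl pointwise])
  also have "\<dots> = S * (\<Sum>x\<in>UNIV. 2 powr (- l x)) - S
      + ln 2 * ((\<Sum>x\<in>UNIV. g x * l x) - (\<Sum>x\<in>UNIV. g x * shannon_len g x))"
    by (simp add: sum.distrib sum_subtractf sum_distrib_left right_diff_distrib S_def)
  finally show ?thesis by (simp add: algebra_simps)
qed

lemma gibbs_inequality:
  fixes g l :: "'a::finite \<Rightarrow> real"
  assumes g: "\<And>x. g x > 0" and l: "l \<in> Lam"
  shows "(\<Sum>x\<in>UNIV. g x * shannon_len g x) \<le> (\<Sum>x\<in>UNIV. g x * l x)"
    and "(\<Sum>x\<in>UNIV. g x * shannon_len g x) = (\<Sum>x\<in>UNIV. g x * l x) \<Longrightarrow> l = shannon_len g"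
proof -
  define S where "S = (\<Sum>y\<in>UNIV. g y)"
  define \<rho> where "\<rho> x = S * 2 powr (- l x) / g x" for x
  have S: "S > 0" unfolding S_def using g by (simp add: sum_pos)
  have \<rho>: "\<rho> x > 0" for x using S g[of x] by (simp add: \<rho>_def)
  have terms: "0 \<le> g x * (\<rho> x - 1 - ln (\<rho> x))" for x
    using ln_le_minus_one[OF \<rho>] g[of x] by (simp add: less_imp_le)
  have slack: "0 \<le> S * (1 - (\<Sum>x\<in>UNIV. 2 powr (- l x)))"
    using l S by (simp add: Lam_def)
  have gap: "ln 2 * ((\<Sum>x\<in>UNIV. g x * l x) - (\<Sum>x\<in>UNIV. g x * shannon_len g x))
    = (\<Sum>x\<in>UNIV. g x * (\<rho> x - 1 - ln (\<rho> x))) + S * (1 - (\<Sum>x\<in>UNIV. 2 powr (- l x)))"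
    using gibbs_gap[of g l, OF g] by (simp add: \<rho>_def S_def)
  have sum_terms: "0 \<le> (\<Sum>x\<in>UNIV. g x * (\<rho> x - 1 - ln (\<rho> x)))"
    by (rule sum_nonneg) (rule terms)
  have "0 \<le> ln 2 * ((\<Sum>x\<in>UNIV. g x * l x) - (\<Sum>x\<in>UNIV. g x * shannon_len g x))"
    using gap sum_terms slack by linarith
  then show "(\<Sum>x\<in>UNIV. g x * shannon_len g x) \<le> (\<Sum>x\<in>UNIV. g x * l x)"
    by (simp add: zero_le_mult_iff)
  assume "(\<Sum>x\<in>UNIV. g x * shannon_len g x) = (\<Sum>x\<in>UNIV. g x * l x)"
  then have "ln 2 * ((\<Sum>x\<in>UNIV. g x * l x) - (\<Sum>x\<in>UNIV. g x * shannon_len g x)) = 0"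
    by simp
  then have "(\<Sum>x\<in>UNIV. g x * (\<rho> x - 1 - ln (\<rho> x))) = 0"
    using gap sum_terms slack by linarith
  then have zero_terms: "g x * (\<rho> x - 1 - ln (\<rho> x)) = 0" for x
    using sum_nonneg_eq_0_iff[of UNIV "\<lambda>x. g x * (\<rho> x - 1 - ln (\<rho> x))"] terms by simp
  have "ln (\<rho> x) = \<rho> x - 1" for x
    using zero_terms[of x] g[of x] by simp
  then have "\<rho> x = 1" for x using \<rho> ln_eq_minus_one by blast
  then have tight: "2 powr (- l x) = g x / S" for x using S g[of x] by (simp add: \<rho>_def field_simps)
  then show "l = shannon_len g"
    by (intro ext) (simp add: shannon_len_def S_def[symmetric] flip: tight)
qed

lemma gt_pos:
  assumes "\<And>x. P x > 0" and "Q \<in> pmfs" and "z \<ge> 0"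
  shows "gt z Q P x > 0"
proof -
  have "0 \<le> z * sqrt (Q x * P x)" using assms by (simp add: pmfs_def less_imp_le)
  moreover have "0 < (1 + z^2 / 2) * P x" using assms(1)[of x] by (simp add: add_pos_nonneg)
  ultimately show ?thesis unfolding gt_def by linarith
qed

lemma gibbs_val_eq_obj_shannon_len:
  assumes "\<And>x. gt z Q P x > 0"
  shows "gibbs_val P Lth z Q = obj P Lth z Q (shannon_len (gt z Q P))"
  using sum_mult_shannon_len[of "gt z Q P", OF assms] by (simp add: gibbs_val_def obj_def)

lemma gibbs_val_le_obj:
  assumes "\<And>x. P x > 0" and "Q \<in> pmfs" and "z \<ge> 0" and "l \<in> Lam"
  shows "gibbs_val P Lth z Q \<le> obj P Lth z Q l"
  using gibbs_inequality(1)[OF gt_pos[OF assms(1-3)] assms(4)]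
  by (simp add: gibbs_val_eq_obj_shannon_len[OF gt_pos[OF assms(1-3)]] obj_def)

lemma obj_eq_gibbs_val_imp:
  assumes "\<And>x. P x > 0" and "Q \<in> pmfs" and "z \<ge> 0" and "l \<in> Lam"
    and "obj P Lth z Q l = gibbs_val P Lth z Q"
  shows "l = shannon_len (gt z Q P)"
  using gibbs_inequality(2)[OF gt_pos[OF assms(1-3)] assms(4)] assms(5)
  by (simp add: gibbs_val_eq_obj_shannon_len[OF gt_pos[OF assms(1-3)]] obj_def)

section \<open>The inner maximum: the M/G/1 delay\<close>

definition queue_delay :: "('a::finite \<Rightarrow> real) \<Rightarrow> real \<Rightarrow> ('a \<Rightarrow> real) \<Rightarrow> real" where
  "queue_delay P Lth l = expect P l + expect P (\<lambda>x. (l x)^2) / (2 * (Lth - expect P l))"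

lemma obj_expand:
  "obj P Lth z Q l
     = (1 + z^2/2) * expect P l + z * (\<Sum>x\<in>UNIV. sqrt (Q x * P x) * l x) - z^2/2 * Lth"
  by (simp add: obj_def gt_def expect_def algebra_simps sum.distrib sum_distrib_left)

lemma obj_le_queue_delay:
  fixes P Q l :: "'a::finite \<Rightarrow> real"
  assumes P: "\<And>x. P x \<ge> 0" and Q: "Q \<in> pmfs" and "expect P l < Lth"
  shows "obj P Lth z Q l \<le> queue_delay P Lth l"
proof -
  define D where "D = Lth - expect P l"
  have D: "D > 0" using assms by (simp add: D_def)
  have amgm: "z * (sqrt (Q x * P x) * l x) \<le> z^2 * D / 2 * Q x + P x * (l x)^2 / (2 * D)" for x
  proof -
    have "0 \<le> (z * D * sqrt (Q x) - sqrt (P x) * l x)^2" by simp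
    then have "2 * D * (z * (sqrt (Q x) * sqrt (P x) * l x))
        \<le> D * (D * (z^2 * (sqrt (Q x))^2)) + (sqrt (P x))^2 * (l x)^2"
      by (simp add: power2_eq_square algebra_simps)
    then show ?thesis
      using D P[of x] Q by (simp add: pmfs_def real_sqrt_mult field_simps)
  qed
  have "z * (\<Sum>x\<in>UNIV. sqrt (Q x * P x) * l x)
      \<le> (\<Sum>x\<in>UNIV. z^2 * D / 2 * Q x + P x * (l x)^2 / (2 * D))"
    unfolding sum_distrib_left by (rule sum_mono) (rule amgm)
  also have "\<dots> = z^2 * D / 2 + expect P (\<lambda>x. (l x)^2) / (2 * D)"
    using Q by (simp add: pmfs_def sum.distrib expect_def
        flip: sum_distrib_left sum_divide_distrib)
  finally have "z * (\<Sum>x\<in>UNIV. sqrt (Q x * P x) * l x)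
      \<le> z^2 * D / 2 + expect P (\<lambda>x. (l x)^2) / (2 * D)" .
  moreover have "(1 + z^2/2) * expect P l - z^2/2 * Lth = expect P l - z^2 * D / 2"
    by (simp add: D_def field_simps)
  ultimately show ?thesis
    unfolding obj_expand queue_delay_def D_def[symmetric] by linarith
qed

text \<open>The equality case of the AM-GM step above.\<close>
definition saddle_z :: "('a::finite \<Rightarrow> real) \<Rightarrow> real \<Rightarrow> ('a \<Rightarrow> real) \<Rightarrow> real" where
  "saddle_z P Lth l = sqrt (expect P (\<lambda>x. (l x)^2)) / (Lth - expect P l)"

definition saddle_Q :: "('a::finite \<Rightarrow> real) \<Rightarrow> ('a \<Rightarrow> real) \<Rightarrow> 'a \<Rightarrow> real" where
  "saddle_Q P l x = P x * (l x)^2 / expect P (\<lambda>x. (l x)^2)"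

lemma saddle_z_nonneg:
  assumes "\<And>x. P x \<ge> 0" and "expect P l < Lth"
  shows "saddle_z P Lth l \<ge> 0"
  unfolding saddle_z_def using assms by (intro divide_nonneg_pos) (auto simp: expect_def intro: sum_nonneg)

lemma saddle_Q_pmf:
  assumes "\<And>x. P x \<ge> 0" and "expect P (\<lambda>x. (l x)^2) > 0"
  shows "saddle_Q P l \<in> pmfs"
  using assms by (simp add: pmfs_def saddle_Q_def expect_def flip: sum_divide_distrib)

lemma gt_saddle:
  fixes P l :: "'a::finite \<Rightarrow> real"
  assumes "P x \<ge> 0" and "l x \<ge> 0" and "expect P (\<lambda>x. (l x)^2) > 0" and "expect P l < Lth"
  defines "m \<equiv> expect P (\<lambda>x. (l x)^2)" and "D \<equiv> Lth - expect P l"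
  shows "gt (saddle_z P Lth l) (saddle_Q P l) P x = P x * (1 + m / (2 * D^2) + l x / D)"
proof -
  have "saddle_Q P l x * P x = (P x * l x)^2 / m"
    by (simp add: saddle_Q_def m_def power2_eq_square)
  then have "sqrt (saddle_Q P l x * P x) = P x * l x / sqrt m"
    using assms by (simp add: real_sqrt_divide)
  then show ?thesis
    using assms by (simp add: gt_def saddle_z_def m_def[symmetric] D_def[symmetric]
        field_simps power2_eq_square)
qed

lemma obj_saddle:
  fixes P l :: "'a::finite \<Rightarrow> real"
  assumes "\<And>x. P x \<ge> 0" and "\<And>x. l x \<ge> 0" and "expect P (\<lambda>x. (l x)^2) > 0"
    and "expect P l < Lth"
  shows "obj P Lth (saddle_z P Lth l) (saddle_Q P l) l = queue_delay P Lth l"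
proof -
  define m where "m = expect P (\<lambda>x. (l x)^2)"
  define D where "D = Lth - expect P l"
  have D: "D > 0" and m: "m > 0" using assms by (simp_all add: m_def D_def)
  have "(\<Sum>x\<in>UNIV. gt (saddle_z P Lth l) (saddle_Q P l) P x * l x)
      = (\<Sum>x\<in>UNIV. (1 + m / (2 * D^2)) * (P x * l x) + P x * (l x)^2 / D)"
    using gt_saddle[OF assms(1,2,3,4)] by (simp add: m_def D_def algebra_simps power2_eq_square)
  also have "\<dots> = (1 + m / (2 * D^2)) * expect P l + m / D"
    by (simp add: sum.distrib m_def expect_def flip: sum_distrib_left sum_divide_distrib)
  finally have "obj P Lth (saddle_z P Lth l) (saddle_Q P l) l
      = (1 + m / (2 * D^2)) * expect P l + m / D - m / D^2 / 2 * Lth"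
    using m by (simp add: obj_def saddle_z_def m_def[symmetric] D_def[symmetric] power_divide)
  also have "\<dots> = expect P l + m / (2 * D)"
  proof -
    have "Lth = expect P l + D" by (simp add: D_def)
    then show ?thesis using D by (simp add: field_simps power2_eq_square)
  qed
  finally show ?thesis by (simp add: queue_delay_def m_def D_def)
qed

lemma second_moment_pos:
  fixes P l :: "'a::finite \<Rightarrow> real"
  assumes "card (UNIV :: 'a set) \<ge> 2" and "\<And>x. P x > 0" and "l \<in> Lam"
  shows "expect P (\<lambda>x. (l x)^2) > 0"
proof -
  obtain x where "l x \<noteq> 0"
  proof (rule ccontr)
    assume "\<not> thesis"
    then have "\<forall>x. l x = 0" using that by blast
    then have "(\<Sum>x\<in>UNIV. 2 powr (- l x)) = real (card (UNIV :: 'a set))" by simp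
    then show False using assms(1,3) by (simp add: Lam_def)
  qed
  then have "P x * (l x)^2 > 0" using assms(2)[of x] by simp
  then show ?thesis unfolding expect_def
    by (intro sum_pos2[of UNIV x]) (auto intro!: mult_nonneg_nonneg less_imp_le[OF assms(2)])
qed

lemma SUP_SUP_eq_attained:
  fixes f :: "'a \<Rightarrow> 'b \<Rightarrow> 'c::conditionally_complete_lattice"
  assumes "a \<in> A" and "b \<in> B" and "\<And>x y. x \<in> A \<Longrightarrow> y \<in> B \<Longrightarrow> f x y \<le> f a b"
  shows "(SUP x\<in>A. SUP y\<in>B. f x y) = f a b"
proof -
  have inner: "(SUP y\<in>B. f x y) \<le> f a b" if "x \<in> A" for x
    using assms that by (intro cSUP_least) auto
  have "(SUP y\<in>B. f a y) = f a b"
    using assms by (intro cSup_eq_maximum) auto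
  then show ?thesis
    using assms inner by (intro cSup_eq_maximum) (auto intro: image_eqI[of _ _ a])
qed

lemma Phi_eq_queue_delay:
  fixes P l :: "'a::finite \<Rightarrow> real"
  assumes "card (UNIV :: 'a set) \<ge> 2" and P: "\<And>x. P x > 0" and l: "l \<in> feasible P Lth"
  shows "Phi P Lth l = queue_delay P Lth l"
proof -
  have lL: "l \<in> Lam" and E: "expect P l < Lth" using l by (auto simp: feasible_def)
  have m: "expect P (\<lambda>x. (l x)^2) > 0" by (rule second_moment_pos[OF assms(1) P lL])
  have P0: "\<And>x. P x \<ge> 0" using P less_imp_le by blast
  have "(SUP z\<in>{0..}. SUP Q\<in>pmfs. obj P Lth z Q l)
      = obj P Lth (saddle_z P Lth l) (saddle_Q P l) l"
  proof (rule SUP_SUP_eq_attained)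
    fix z and Q :: "'a \<Rightarrow> real" assume "Q \<in> pmfs"
    then show "obj P Lth z Q l \<le> obj P Lth (saddle_z P Lth l) (saddle_Q P l) l"
      using obj_le_queue_delay[OF P0 _ E] obj_saddle[OF P0 _ m E] lL by (simp add: Lam_def)
  qed (use saddle_z_nonneg[OF P0 E] saddle_Q_pmf[OF P0 m] in auto)
  then show ?thesis
    using obj_saddle[OF P0 _ m E] lL by (simp add: Phi_def Lam_def)
qed

lemma Delta_star_eq_INF_queue_delay:
  fixes P :: "'a::finite \<Rightarrow> real"
  assumes "card (UNIV :: 'a set) \<ge> 2" and "\<And>x. P x > 0"
  shows "Delta_star P Lth = (INF l\<in>feasible P Lth. queue_delay P Lth l)"
  unfolding Delta_star_def using Phi_eq_queue_delay[OF assms] by simp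

section \<open>Existence of an optimal code\<close>

lemma expect_nonneg: "(\<And>x. P x \<ge> 0) \<Longrightarrow> (\<And>x. l x \<ge> 0) \<Longrightarrow> expect P l \<ge> 0"
  by (simp add: expect_def sum_nonneg)

lemma expect_square_le:
  assumes "P \<in> pmfs"
  shows "(expect P l)^2 \<le> expect P (\<lambda>x. (l x)^2)"
proof -
  define a where "a = expect P l"
  have "0 \<le> (\<Sum>x\<in>UNIV. P x * (l x - a)^2)"
    using assms by (intro sum_nonneg) (simp add: pmfs_def)
  also have "\<dots> = (\<Sum>x\<in>UNIV. P x * (l x)^2 - 2 * a * (P x * l x) + a^2 * P x)"
    by (intro sum.cong) (auto simp: algebra_simps power2_eq_square)
  also have "\<dots> = expect P (\<lambda>x. (l x)^2) - a^2"
    using assms by (simp add: pmfs_def sum.distrib sum_subtractf expect_def a_def power2_eq_square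
        flip: sum_distrib_left)
  finally show ?thesis by (simp add: a_def)
qed

lemma queue_delay_ge_near_threshold:
  assumes P: "P \<in> pmfs" and l: "\<And>x. l x \<ge> 0"
    and E: "Lth / 2 \<le> expect P l" "expect P l < Lth"
  shows "Lth^2 / (8 * (Lth - expect P l)) \<le> queue_delay P Lth l"
proof -
  have E0: "expect P l \<ge> 0" using P l by (intro expect_nonneg) (auto simp: pmfs_def)
  have "(Lth / 2)^2 \<le> (expect P l)^2" using E E0 by (intro power_mono) auto
  then have "Lth^2 / 4 \<le> (expect P l)^2" by (simp add: power_divide)
  also have "\<dots> \<le> expect P (\<lambda>x. (l x)^2)" by (rule expect_square_le[OF P])
  finally have "(Lth^2 / 4) / (2 * (Lth - expect P l)) \<le> expect P (\<lambda>x. (l x)^2) / (2 * (Lth - expect P l))"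
    using E by (intro divide_right_mono) auto
  then show ?thesis using E0 by (simp add: queue_delay_def)
qed

lemma compact_box:
  fixes lo hi :: "'a \<Rightarrow> real"
  shows "compact {l. \<forall>x. l x \<in> {lo x..hi x}}"
proof -
  have "compactin (product_topology (\<lambda>_. euclidean) UNIV) (PiE UNIV (\<lambda>x. {lo x..hi x}))"
    by (simp add: compactin_PiE)
  moreover have "PiE UNIV (\<lambda>x. {lo x..hi x}) = {l. \<forall>x. l x \<in> {lo x..hi x}}"
    by (auto simp: PiE_def Pi_def)
  ultimately show ?thesis by (simp add: euclidean_product_topology)
qed

lemma coordinate_continuous_on [continuous_intros]:
  "continuous_on S (\<lambda>l::'a \<Rightarrow> real. l x)"
  by (rule continuous_on_subset[OF continuous_on_product_coordinates]) simp

lemma compact_Lam_expect_le: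
  fixes P :: "'a::finite \<Rightarrow> real"
  assumes P: "\<And>x. P x > 0"
  shows "compact (Lam \<inter> {l. expect P l \<le> c})"
proof -
  have bound: "l x \<le> c / P x" if "\<And>x. l x \<ge> 0" and "expect P l \<le> c" for l x
  proof -
    have "P x * l x \<le> expect P l" unfolding expect_def
      using P that by (intro member_le_sum) (simp_all add: less_imp_le)
    then show ?thesis using P[of x] that by (simp add: field_simps)
  qed
  have "Lam \<inter> {l. expect P l \<le> c} = {l. \<forall>x. l x \<in> {0..c / P x}}
      \<inter> {l. (\<Sum>x\<in>UNIV. 2 powr (- l x)) \<le> 1} \<inter> {l. expect P l \<le> c}"
    using bound by (auto simp: Lam_def)
  also have "compact \<dots>"
  proof (intro compact_Int_closed closed_Collect_le compact_box)
    show "continuous_on UNIV (\<lambda>l::'a \<Rightarrow> real. expect P l)"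
      unfolding expect_def by (intro continuous_intros)
  qed (auto intro!: continuous_intros)
  finally show ?thesis .
qed

lemma exists_queue_delay_minimizer:
  fixes P :: "'a::finite \<Rightarrow> real"
  assumes P: "\<And>x. P x > 0" "P \<in> pmfs" and Lth: "Lth > 0" and l0: "l0 \<in> feasible P Lth"
  obtains ls where "ls \<in> feasible P Lth"
    and "\<And>l. l \<in> feasible P Lth \<Longrightarrow> queue_delay P Lth ls \<le> queue_delay P Lth l"
proof -
  define M where "M = queue_delay P Lth l0"
  define d where "d = min (Lth / 2) (Lth^2 / (8 * (\<bar>M\<bar> + 1)))"
  have d: "d > 0" using Lth by (simp add: d_def)
  have d_half: "d \<le> Lth / 2" unfolding d_def by (rule min.cobounded1)
  have "d \<le> Lth^2 / (8 * (\<bar>M\<bar> + 1))" unfolding d_def by (rule min.cobounded2)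
  then have d_M: "(\<bar>M\<bar> + 1) * (8 * d) \<le> Lth^2" by (simp add: field_simps)
  have far: "M < queue_delay P Lth l" if l: "l \<in> feasible P Lth" and El: "Lth - d < expect P l" for l
  proof -
    have E: "Lth / 2 \<le> expect P l" "expect P l < Lth" using l El d_half by (auto simp: feasible_def)
    have "\<bar>M\<bar> + 1 \<le> Lth^2 / (8 * d)" using d d_M by (simp add: pos_le_divide_eq)
    also have "\<dots> \<le> Lth^2 / (8 * (Lth - expect P l))"
      using E El d by (intro divide_left_mono mult_pos_pos) auto
    also have "\<dots> \<le> queue_delay P Lth l"
      using l E by (intro queue_delay_ge_near_threshold[OF P(2)]) (auto simp: feasible_def Lam_def)
    finally show ?thesis by linarith
  qed
  define K where "K = Lam \<inter> {l. expect P l \<le> Lth - d}"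
  have K_feasible: "K \<subseteq> feasible P Lth" using d by (auto simp: K_def feasible_def)
  have K_iff: "l \<in> K \<longleftrightarrow> expect P l \<le> Lth - d" if "l \<in> feasible P Lth" for l
    using that by (auto simp: K_def feasible_def)
  have "\<not> Lth - d < expect P l0" using far[OF l0] by (auto simp: M_def)
  then have l0K: "l0 \<in> K" using K_iff[OF l0] by simp
  have "continuous_on K (queue_delay P Lth)"
  proof -
    have "Lth - expect P l \<noteq> 0" if "l \<in> K" for l
      using K_feasible that unfolding feasible_def by auto
    then show ?thesis unfolding queue_delay_def expect_def by (intro continuous_intros) simp_all
  qed
  moreover have "compact K" unfolding K_def by (rule compact_Lam_expect_le[OF P(1)])
  ultimately obtain ls where ls: "ls \<in> K"
    and min: "\<And>l. l \<in> K \<Longrightarrow> queue_delay P Lth ls \<le> queue_delay P Lth l"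
    using continuous_attains_inf[of K "queue_delay P Lth"] l0K by blast
  show thesis
  proof (rule that)
    show "ls \<in> feasible P Lth" using ls K_feasible by blast
    fix l assume l: "l \<in> feasible P Lth"
    show "queue_delay P Lth ls \<le> queue_delay P Lth l"
    proof (cases "l \<in> K")
      case True
      then show ?thesis by (rule min)
    next
      case False
      then have "M < queue_delay P Lth l" using far[OF l] K_iff[OF l] by simp
      then show ?thesis using min[OF l0K] by (simp add: M_def)
    qed
  qed
qed

section \<open>First-order optimality and the saddle point\<close>

lemma Lam_segment:
  fixes a b :: "'a::finite \<Rightarrow> real"
  assumes a: "a \<in> Lam" and b: "b \<in> Lam" and t: "0 \<le> t" "t \<le> 1"
  shows "(\<lambda>x. a x + t * (b x - a x)) \<in> Lam"
proof -
  have segment: "a x + t * (b x - a x) = (1 - t) * a x + t * b x" for x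
    by (simp add: algebra_simps)
  have convex: "2 powr (- ((1 - t) * a x + t * b x)) \<le> (1 - t) * 2 powr (- a x) + t * 2 powr (- b x)" for x
    using convex_onD[OF exp_convex, of t "- a x * ln 2" "- b x * ln 2"] t
    by (simp add: powr_def algebra_simps)
  have "(\<Sum>x\<in>UNIV. 2 powr (- ((1 - t) * a x + t * b x)))
      \<le> (\<Sum>x\<in>UNIV. (1 - t) * 2 powr (- a x) + t * 2 powr (- b x))"
    by (rule sum_mono) (rule convex)
  also have "\<dots> = (1 - t) * (\<Sum>x\<in>UNIV. 2 powr (- a x)) + t * (\<Sum>x\<in>UNIV. 2 powr (- b x))"
    by (simp add: sum.distrib sum_distrib_left)
  also have "\<dots> \<le> (1 - t) * 1 + t * 1"
    using a b t by (intro add_mono mult_left_mono) (auto simp: Lam_def)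
  finally show ?thesis
    using a b t by (simp add: Lam_def segment)
qed

lemma expect_add: "expect P (\<lambda>x. f x + g x) = expect P f + expect P g"
  by (simp add: expect_def distrib_left sum.distrib)

lemma expect_scale: "expect P (\<lambda>x. c * f x) = c * expect P f"
  by (simp add: expect_def sum_distrib_left mult.left_commute)

lemma expect_segment:
  "expect P (\<lambda>x. u x + t * (v x - u x)) = expect P u + t * expect P (\<lambda>x. v x - u x)"
  "expect P (\<lambda>x. (u x + t * (v x - u x))^2) = expect P (\<lambda>x. (u x)^2)
     + 2 * t * expect P (\<lambda>x. u x * (v x - u x)) + t^2 * expect P (\<lambda>x. (v x - u x)^2)"
proof -
  show "expect P (\<lambda>x. u x + t * (v x - u x)) = expect P u + t * expect P (\<lambda>x. v x - u x)"
    by (simp add: expect_add expect_scale)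
  have "(\<lambda>x. (u x + t * (v x - u x))^2)
      = (\<lambda>x. (u x)^2 + ((2 * t) * (u x * (v x - u x)) + t^2 * (v x - u x)^2))"
    by (auto simp: power2_eq_square algebra_simps)
  then show "expect P (\<lambda>x. (u x + t * (v x - u x))^2) = expect P (\<lambda>x. (u x)^2)
     + 2 * t * expect P (\<lambda>x. u x * (v x - u x)) + t^2 * expect P (\<lambda>x. (v x - u x)^2)"
    by (simp add: expect_add expect_scale)
qed

lemma queue_delay_first_order:
  fixes P ls l :: "'a::finite \<Rightarrow> real"
  assumes P: "\<And>x. P x \<ge> 0" and ls: "ls \<in> feasible P Lth"
    and min: "\<And>l. l \<in> feasible P Lth \<Longrightarrow> queue_delay P Lth ls \<le> queue_delay P Lth l"
    and l: "l \<in> Lam"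
  defines "D \<equiv> Lth - expect P ls" and "m \<equiv> expect P (\<lambda>x. (ls x)^2)"
    and "e \<equiv> expect P (\<lambda>x. l x - ls x)" and "c \<equiv> expect P (\<lambda>x. ls x * (l x - ls x))"
  shows "0 \<le> (2 * D^2 + m) * e + 2 * D * c"
  \<comment> \<open>The right-hand side is 2 D^2 times the derivative of queue_delay at ls in direction l - ls.\<close>
proof -
  define q where "q = expect P (\<lambda>x. (l x - ls x)^2)"
  define K0 where "K0 = (2 * D^2 + m) * e + 2 * D * c"
  define K1 where "K1 = D * q - 2 * D * e^2"
  have D: "D > 0" using ls by (simp add: D_def feasible_def)
  have step: "0 \<le> K0 + t * K1"
    if t: "0 < t" "t < min 1 (D / (\<bar>e\<bar> + 1))" for t
  proof -
    define lt where "lt x = ls x + t * (l x - ls x)" for x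
    have "t * e \<le> t * \<bar>e\<bar>" using t by (simp add: mult_left_mono)
    also have "\<dots> < D" using t D by (simp add: field_simps)
    finally have De: "D - t * e > 0" by simp
    have "lt \<in> feasible P Lth"
      using Lam_segment[of ls l t] ls l t De
      by (simp add: lt_def[abs_def] feasible_def expect_segment D_def e_def)
    then have "0 \<le> queue_delay P Lth lt - queue_delay P Lth ls" using min by simp
    also have "\<dots> = t * e + (m + 2 * t * c + t^2 * q) / (2 * (D - t * e)) - m / (2 * D)"
      by (simp add: queue_delay_def lt_def[abs_def] expect_segment D_def m_def e_def c_def q_def)
    also have "\<dots> = t * (K0 + t * K1) / (2 * D * (D - t * e))"
      using D De by (simp add: K0_def K1_def field_simps power2_eq_square)
    finally have "0 \<le> t * (K0 + t * K1)"
      using mult_pos_pos[OF D De] by (simp add: zero_le_divide_iff)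
    then show ?thesis using t by (simp add: zero_le_mult_iff)
  qed
  have "((\<lambda>t. K0 + t * K1) \<longlongrightarrow> K0 + 0 * K1) (at_right 0)"
    by (intro tendsto_intros)
  then have "((\<lambda>t. K0 + t * K1) \<longlongrightarrow> K0) (at_right 0)" by simp
  moreover have "eventually (\<lambda>t. 0 \<le> K0 + t * K1) (at_right 0)"
    unfolding eventually_at_right_field using D
    by (intro exI[of _ "min 1 (D / (\<bar>e\<bar> + 1))"]) (auto intro: step)
  ultimately have "0 \<le> K0" by (rule tendsto_lowerbound) simp_all
  then show ?thesis by (simp add: K0_def)
qed

lemma obj_saddle_minimal:
  fixes P ls l :: "'a::finite \<Rightarrow> real"
  assumes card: "card (UNIV :: 'a set) \<ge> 2" and P: "\<And>x. P x > 0" and ls: "ls \<in> feasible P Lth"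
    and min: "\<And>l. l \<in> feasible P Lth \<Longrightarrow> queue_delay P Lth ls \<le> queue_delay P Lth l"
    and l: "l \<in> Lam"
  shows "obj P Lth (saddle_z P Lth ls) (saddle_Q P ls) ls \<le> obj P Lth (saddle_z P Lth ls) (saddle_Q P ls) l"
proof -
  define D where "D = Lth - expect P ls"
  define m where "m = expect P (\<lambda>x. (ls x)^2)"
  define e where "e = expect P (\<lambda>x. l x - ls x)"
  define c where "c = expect P (\<lambda>x. ls x * (l x - ls x))"
  have lsL: "ls \<in> Lam" and lt: "expect P ls < Lth" using ls by (auto simp: feasible_def)
  have D: "D > 0" using lt by (simp add: D_def)
  have P0: "\<And>x. P x \<ge> 0" using P less_imp_le by blast
  have "\<And>x. ls x \<ge> 0" using lsL by (simp add: Lam_def)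
  note g = gt_saddle[OF P0 this second_moment_pos[OF card P lsL] lt, folded m_def D_def]
  have "obj P Lth (saddle_z P Lth ls) (saddle_Q P ls) l - obj P Lth (saddle_z P Lth ls) (saddle_Q P ls) ls
      = (\<Sum>x\<in>UNIV. gt (saddle_z P Lth ls) (saddle_Q P ls) P x * (l x - ls x))"
    by (simp add: obj_def right_diff_distrib sum_subtractf)
  also have "\<dots> = expect P (\<lambda>x. (1 + m / (2 * D^2)) * (l x - ls x) + (1 / D) * (ls x * (l x - ls x)))"
    unfolding expect_def g using D by (intro sum.cong) (auto simp: field_simps)
  also have "\<dots> = ((2 * D^2 + m) * e + 2 * D * c) / (2 * D^2)"
    unfolding expect_add expect_scale e_def[symmetric] c_def[symmetric]
    using D by (simp add: field_simps power2_eq_square)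
  also have "\<dots> \<ge> 0"
    using queue_delay_first_order[OF P0 ls min l] by (simp add: D_def m_def e_def c_def)
  finally show ?thesis by simp
qed

locale delay_minimizer =
  fixes P :: "'a::finite \<Rightarrow> real" and Lth :: real and ls :: "'a \<Rightarrow> real"
  assumes card: "card (UNIV :: 'a set) \<ge> 2"
    and P_pos: "\<And>x. P x > 0"
    and ls_feasible: "ls \<in> feasible P Lth"
    and ls_min: "\<And>l. l \<in> feasible P Lth \<Longrightarrow> queue_delay P Lth ls \<le> queue_delay P Lth l"
begin

abbreviation "zs \<equiv> saddle_z P Lth ls"
abbreviation "Qs \<equiv> saddle_Q P ls"

lemma P_nonneg: "P x \<ge> 0"
  using P_pos less_imp_le by blast

lemma ls_Lam: "ls \<in> Lam" and ls_lt: "expect P ls < Lth"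
  using ls_feasible by (simp_all add: feasible_def)

lemma saddle_in_domain: "zs \<ge> 0" "Qs \<in> pmfs"
  using saddle_z_nonneg[OF P_nonneg ls_lt]
    saddle_Q_pmf[OF P_nonneg second_moment_pos[OF card P_pos ls_Lam]] by auto

lemma Delta_star_eq: "Delta_star P Lth = queue_delay P Lth ls"
  unfolding Delta_star_eq_INF_queue_delay[OF card P_pos]
  using ls_feasible ls_min by (intro cInf_eq_minimum) auto

lemma obj_saddle_eq: "obj P Lth zs Qs ls = Delta_star P Lth"
  using obj_saddle[OF P_nonneg _ second_moment_pos[OF card P_pos ls_Lam] ls_lt] ls_Lam
  by (simp add: Delta_star_eq Lam_def)

lemma obj_le_Delta_star: "Q \<in> pmfs \<Longrightarrow> obj P Lth z Q ls \<le> Delta_star P Lth"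
  using obj_le_queue_delay[OF P_nonneg _ ls_lt] by (simp add: Delta_star_eq)

lemma gibbs_val_saddle: "gibbs_val P Lth zs Qs = Delta_star P Lth"
proof (rule antisym)
  show "gibbs_val P Lth zs Qs \<le> Delta_star P Lth"
    using gibbs_val_le_obj[where P = P and Lth = Lth, OF P_pos saddle_in_domain(2,1) ls_Lam]
      obj_saddle_eq by simp
  have "obj P Lth zs Qs ls \<le> obj P Lth zs Qs (shannon_len (gt zs Qs P))"
    by (rule obj_saddle_minimal[OF card P_pos ls_feasible ls_min
          shannon_len_in_Lam[OF gt_pos[where P = P, OF P_pos saddle_in_domain(2,1)]]])
  then show "Delta_star P Lth \<le> gibbs_val P Lth zs Qs"
    using gibbs_val_eq_obj_shannon_len[OF gt_pos[where P = P, OF P_pos saddle_in_domain(2,1)]]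
      obj_saddle_eq by simp
qed

lemma gibbs_val_le_Delta_star: "z \<ge> 0 \<Longrightarrow> Q \<in> pmfs \<Longrightarrow> gibbs_val P Lth z Q \<le> Delta_star P Lth"
  using gibbs_val_le_obj[where P = P and Lth = Lth, OF P_pos _ _ ls_Lam] obj_le_Delta_star[where z = z]
  by fastforce

lemma is_max_val_INF_obj:
  "is_max_val {(INF l\<in>feasible P Lth. obj P Lth z Q l) | z Q. z \<ge> 0 \<and> Q \<in> pmfs} (Delta_star P Lth)"
  unfolding is_max_val_def
proof (intro conjI ballI)
  have "(INF l\<in>feasible P Lth. obj P Lth zs Qs l) = obj P Lth zs Qs ls"
    using ls_feasible obj_saddle_minimal[OF card P_pos ls_feasible ls_min]
    by (intro cInf_eq_minimum) (auto simp: feasible_def)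
  then have "(INF l\<in>feasible P Lth. obj P Lth zs Qs l) = Delta_star P Lth"
    using obj_saddle_eq by simp
  then show "Delta_star P Lth \<in> {(INF l\<in>feasible P Lth. obj P Lth z Q l) | z Q. z \<ge> 0 \<and> Q \<in> pmfs}"
    unfolding mem_Collect_eq using saddle_in_domain by (intro exI[of _ zs] exI[of _ Qs]) simp
  fix y assume "y \<in> {(INF l\<in>feasible P Lth. obj P Lth z Q l) | z Q. z \<ge> 0 \<and> Q \<in> pmfs}"
  then obtain z Q where zQ: "z \<ge> 0" "Q \<in> pmfs" and y: "y = (INF l\<in>feasible P Lth. obj P Lth z Q l)"
    by blast
  have "bdd_below ((\<lambda>l. obj P Lth z Q l) ` feasible P Lth)"
    using gibbs_val_le_obj[where P = P and Lth = Lth, OF P_pos zQ(2,1)]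
    by (intro bdd_belowI2) (auto simp: feasible_def)
  then have "y \<le> obj P Lth z Q ls" unfolding y by (rule cINF_lower[OF _ ls_feasible])
  then show "y \<le> Delta_star P Lth" using obj_le_Delta_star[OF zQ(2), where z = z] by linarith
qed

lemma is_max_val_gibbs_val:
  "is_max_val {gibbs_val P Lth z Q | z Q. z \<ge> 0 \<and> Q \<in> pmfs} (Delta_star P Lth)"
  unfolding is_max_val_def
proof (intro conjI ballI)
  show "Delta_star P Lth \<in> {gibbs_val P Lth z Q | z Q. z \<ge> 0 \<and> Q \<in> pmfs}"
    unfolding mem_Collect_eq using saddle_in_domain gibbs_val_saddle
    by (intro exI[of _ zs] exI[of _ Qs]) simp
qed (auto intro: gibbs_val_le_Delta_star)

lemma gibbs_maximizer_gives_unique_minimizer: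
  assumes z0: "z0 \<ge> 0" and Q0: "Q0 \<in> pmfs"
    and max: "\<And>z Q. z \<ge> 0 \<Longrightarrow> Q \<in> pmfs \<Longrightarrow> gibbs_val P Lth z Q \<le> gibbs_val P Lth z0 Q0"
  defines "l0 \<equiv> shannon_len (gt z0 Q0 P)"
  shows "l0 \<in> feasible P Lth \<and> Phi P Lth l0 = Delta_star P Lth
    \<and> (\<forall>l\<in>feasible P Lth. Phi P Lth l = Delta_star P Lth \<longrightarrow> l = l0)"
proof -
  have gibbs0: "gibbs_val P Lth z0 Q0 = Delta_star P Lth"
    using max[OF saddle_in_domain] gibbs_val_saddle gibbs_val_le_Delta_star[OF z0 Q0] by simp
  have unique: "l = l0" if l: "l \<in> feasible P Lth" and Phi: "Phi P Lth l = Delta_star P Lth" for l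
  proof -
    have "obj P Lth z0 Q0 l \<le> Phi P Lth l"
      using l obj_le_queue_delay[OF P_nonneg Q0] Phi_eq_queue_delay[OF card P_pos l]
      by (simp add: feasible_def)
    moreover have "gibbs_val P Lth z0 Q0 \<le> obj P Lth z0 Q0 l"
      using l gibbs_val_le_obj[where P = P and Lth = Lth, OF P_pos Q0 z0] by (simp add: feasible_def)
    ultimately have "obj P Lth z0 Q0 l = gibbs_val P Lth z0 Q0" using Phi gibbs0 by linarith
    then show ?thesis
      using l obj_eq_gibbs_val_imp[where P = P and Lth = Lth, OF P_pos Q0 z0]
      by (simp add: l0_def feasible_def)
  qed
  have Phi_ls: "Phi P Lth ls = Delta_star P Lth"
    using Phi_eq_queue_delay[OF card P_pos ls_feasible] Delta_star_eq by simp
  then have "ls = l0" by (rule unique[OF ls_feasible])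
  then show ?thesis using ls_feasible Phi_ls unique by blast
qed

end

theorem theorem4:
  fixes P :: "'a::finite \<Rightarrow> real" and Lth :: real
  assumes "card (UNIV :: 'a set) \<ge> 2"
    and "\<forall>x. P x > 0"
    and "P \<in> pmfs"
    and "Lth > 0"
    and "entropy P + log 2 (1 + 1 / sqrt 2) < Lth"
  shows "Delta_star P Lth =
           (INF l\<in>feasible P Lth. expect P l + expect P (\<lambda>x. (l x)^2) / (2 * (Lth - expect P l)))
    \<and> is_max_val {(INF l\<in>feasible P Lth. obj P Lth z Q l) | z Q. z \<ge> 0 \<and> Q \<in> pmfs} (Delta_star P Lth)
    \<and> is_max_val {gibbs_val P Lth z Q | z Q. z \<ge> 0 \<and> Q \<in> pmfs} (Delta_star P Lth)
    \<and> (\<forall>z0 Q0. z0 \<ge> 0 \<longrightarrow> Q0 \<in> pmfs \<longrightarrow>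
         (\<forall>z Q. z \<ge> 0 \<longrightarrow> Q \<in> pmfs \<longrightarrow> gibbs_val P Lth z Q \<le> gibbs_val P Lth z0 Q0) \<longrightarrow>
         (let ls = (\<lambda>x. - log 2 (gt z0 Q0 P x / (\<Sum>x'\<in>UNIV. gt z0 Q0 P x')))
          in ls \<in> feasible P Lth \<and> Phi P Lth ls = Delta_star P Lth
             \<and> (\<forall>l\<in>feasible P Lth. Phi P Lth l = Delta_star P Lth \<longrightarrow> l = ls)))"
proof -
  have P: "\<And>x. P x > 0" using assms(2) by blast
  have "0 < log 2 (1 + 1 / sqrt 2)" by (subst zero_less_log_cancel_iff) (auto intro: add_pos_pos)
  then have "shannon_len P \<in> feasible P Lth"
    using assms(3,5) shannon_len_in_Lam[OF P] by (simp add: feasible_def expect_shannon_len_eq_entropy)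
  then obtain ls where "ls \<in> feasible P Lth"
    and "\<And>l. l \<in> feasible P Lth \<Longrightarrow> queue_delay P Lth ls \<le> queue_delay P Lth l"
    using exists_queue_delay_minimizer[OF P assms(3,4)] by blast
  then interpret delay_minimizer P Lth ls
    using assms(1) P by unfold_locales
  have "Delta_star P Lth =
      (INF l\<in>feasible P Lth. expect P l + expect P (\<lambda>x. (l x)^2) / (2 * (Lth - expect P l)))"
    using Delta_star_eq_INF_queue_delay[where P = P and Lth = Lth, OF assms(1) P]
    by (simp add: queue_delay_def)
  then show ?thesis
    using is_max_val_INF_obj is_max_val_gibbs_val gibbs_maximizer_gives_unique_minimizer
    unfolding Let_def shannon_len_eq by blast
qed

end
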